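(* For all $P,Q\in\Gamma_n$, $$D_{f_8}(P\|Q)\le \tfrac13 D_{f_1}(P\|Q)\le \tfrac14 D_{f_3}(P\|Q)\le \tfrac13 D_{f_2}(P\|Q)\le D_{f_6}(P\|Q).$$ Equivalently, $$\tfrac14\Delta-\tfrac13 M_{SH}\le \tfrac13\big(h-\tfrac12 M_{SG}\big)\le \tfrac14\big(h-\tfrac13 M_{SH}\big)\le\tfrac13\big(h-\tfrac14\Delta\big)\le \tfrac12 M_{SG}-\tfrac13 M_{SH},$$ all measures evaluated at $(P\|Q)$.
   Context: $\Gamma_n=\{P=(p_1,\dots,p_n): p_i>0,\ \sum_i p_i=1\}$, $n\ge2$. For $f:(0,\infty)\to\mathbb{R}$, $D_f(P\|Q)=\sum_{i=1}^n q_i f(p_i/q_i)$. For $x>0$ let $A=\frac{x+1}{2}$, $G=\sqrt x$, $H=\frac{2x}{x+1}$, $S=\sqrt{\frac{x^2+1}{2}}$ (means of $x$ and $1$), and define $f_1(x)=A-\frac{G+S}{2}$, $f_2(x)=\frac{A+H}{2}-G$, $f_3(x)=\frac13\big[3A+H-S-3G\big]$, $f_6(x)=\frac16\big[S+2H-3G\big]$, $f_8(x)=\frac16\big[3A-2S-H\big]$. The measures: $M_{SG}=\sum_i\big(\sqrt{(p_i^2+q_i^2)/2}-\sqrt{p_iq_i}\big)$, $M_{SH}=\sum_i\big(\sqrt{(p_i^2+q_i^2)/2}-\frac{2p_iq_i}{p_i+q_i}\big)$, $h=\frac12\sum_i(\sqrt{p_i}-\sqrt{q_i})^2$, $\Delta=\sum_i\frac{(p_i-q_i)^2}{p_i+q_i}$.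 *)

theory Defs
  imports Complex_Main
begin

definition prob_vec :: "nat \<Rightarrow> (nat \<Rightarrow> real) \<Rightarrow> bool" where
  "prob_vec n P \<longleftrightarrow> (\<forall>i<n. P i > 0) \<and> (\<Sum>i<n. P i) = 1"

definition csiszar :: "(real \<Rightarrow> real) \<Rightarrow> nat \<Rightarrow> (nat \<Rightarrow> real) \<Rightarrow> (nat \<Rightarrow> real) \<Rightarrow> real" where
  "csiszar f n P Q = (\<Sum>i<n. Q i * f (P i / Q i))"

definition meanA :: "real \<Rightarrow> real" where "meanA x = (x + 1) / 2"
definition meanG :: "real \<Rightarrow> real" where "meanG x = sqrt x"
definition meanH :: "real \<Rightarrow> real" where "meanH x = 2 * x / (x + 1)"
definition meanS :: "real \<Rightarrow> real" where "meanS x = sqrt ((x\<^sup>2 + 1) / 2)"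

definition f1 :: "real \<Rightarrow> real" where "f1 x = meanA x - (meanG x + meanS x) / 2"
definition f2 :: "real \<Rightarrow> real" where "f2 x = (meanA x + meanH x) / 2 - meanG x"
definition f3 :: "real \<Rightarrow> real" where
  "f3 x = (1/3) * (3 * meanA x + meanH x - meanS x - 3 * meanG x)"
definition f6 :: "real \<Rightarrow> real" where
  "f6 x = (1/6) * (meanS x + 2 * meanH x - 3 * meanG x)"
definition f8 :: "real \<Rightarrow> real" where
  "f8 x = (1/6) * (3 * meanA x - 2 * meanS x - meanH x)"

end

theory Submission
  imports Defs
begin

text \<open>Each \<open>f\<^sub>k\<close> is a linear combination of the means \<open>A, G, H, S\<close>, and consecutive terms of
  the chain differ by a positive multiple of \<open>S + H - A - G\<close>. So everything reduces to the
  pointwise inequality \<open>A + G \<le> S + H\<close>: with \<open>x = u\<^sup>2\<close> and denominators cleared, it says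
  \<open>p(u)\<^sup>2 \<le> 2 (u\<^sup>4 + 1) (u\<^sup>2 + 1)\<^sup>2\<close> for \<open>p(u) = u\<^sup>4 + 2u\<^sup>3 - 2u\<^sup>2 + 2u + 1\<close>, and the
  difference of the two sides is \<open>(u - 1)\<^sup>4 (u\<^sup>2 - 1)\<^sup>2\<close>. The f-divergence is linear
  in \<open>f\<close> and monotone in \<open>f\<close> on \<open>[0,\<infinity>)\<close>, so the chain carries over to the divergences.\<close>

lemma meanA_meanG_le_meanS_meanH:
  fixes x :: real
  assumes "0 \<le> x"
  shows "meanA x + meanG x \<le> meanS x + meanH x"
proof -
  define u where "u = sqrt x"
  define d where "d = u\<^sup>2 + 1"
  define p where "p = u ^ 4 + 2 * u ^ 3 - 2 * u\<^sup>2 + 2 * u + 1"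
  have u_nonneg: "0 \<le> u" and x_eq: "x = u\<^sup>2"
    using assms by (simp_all add: u_def)
  have d_pos: "0 < d"
    by (simp add: d_def add_nonneg_pos)
  have lhs_eq: "meanA x + meanG x - meanH x = p / (2 * d)"
    using u_nonneg d_pos unfolding meanA_def meanG_def meanH_def x_eq p_def d_def
    by (simp add: field_simps power2_eq_square power3_eq_cube power4_eq_xxxx)
  have "2 * (u ^ 4 + 1) * d\<^sup>2 - p\<^sup>2 = (u - 1) ^ 4 * (u\<^sup>2 - 1)\<^sup>2"
    unfolding p_def d_def
    by (simp add: algebra_simps power2_eq_square power3_eq_cube power4_eq_xxxx)
  moreover have "0 \<le> (u - 1) ^ 4 * (u\<^sup>2 - 1)\<^sup>2"
    by simp
  ultimately have "p\<^sup>2 \<le> 2 * (u ^ 4 + 1) * d\<^sup>2"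
    by linarith
  then have "(p / (2 * d))\<^sup>2 \<le> (u ^ 4 + 1) / 2"
    using d_pos by (simp add: power_divide field_simps)
  then have "p / (2 * d) \<le> meanS x"
    unfolding meanS_def x_eq by (simp add: real_le_rsqrt flip: power_mult)
  then show ?thesis
    using lhs_eq by linarith
qed

lemma f8_f1_f3_f2_f6_chain:
  fixes x :: real
  assumes "0 \<le> x"
  shows "f8 x \<le> 1/3 * f1 x" "1/3 * f1 x \<le> 1/4 * f3 x"
    "1/4 * f3 x \<le> 1/3 * f2 x" "1/3 * f2 x \<le> f6 x"
  using meanA_meanG_le_meanS_meanH[OF assms]
  unfolding f1_def f2_def f3_def f6_def f8_def by (simp_all add: field_simps)

lemma csiszar_cmult: "csiszar (\<lambda>x. c * f x) n P Q = c * csiszar f n P Q"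
  unfolding csiszar_def by (simp add: sum_distrib_left algebra_simps)

lemma csiszar_mono:
  assumes nonneg: "\<And>i. i < n \<Longrightarrow> 0 \<le> P i \<and> 0 \<le> Q i"
    and le: "\<And>x. 0 \<le> x \<Longrightarrow> f x \<le> g x"
  shows "csiszar f n P Q \<le> csiszar g n P Q"
  unfolding csiszar_def
proof (rule sum_mono)
  fix i assume "i \<in> {..<n}"
  then show "Q i * f (P i / Q i) \<le> Q i * g (P i / Q i)"
    using nonneg le by (simp add: mult_left_mono)
qed

lemma csiszar_mono_cmult:
  assumes "\<And>i. i < n \<Longrightarrow> 0 \<le> P i \<and> 0 \<le> Q i"
    and "\<And>x. 0 \<le> x \<Longrightarrow> a * f x \<le> b * g x"
  shows "a * csiszar f n P Q \<le> b * csiszar g n P Q"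
  using csiszar_mono[of n P Q "\<lambda>x. a * f x" "\<lambda>x. b * g x"] assms
  by (simp add: csiszar_cmult)

theorem theorem7p1:
  fixes n :: nat and P Q :: "nat \<Rightarrow> real"
  assumes "n \<ge> 2" and "prob_vec n P" and "prob_vec n Q"
  shows "csiszar f8 n P Q \<le> (1/3) * csiszar f1 n P Q
       \<and> (1/3) * csiszar f1 n P Q \<le> (1/4) * csiszar f3 n P Q
       \<and> (1/4) * csiszar f3 n P Q \<le> (1/3) * csiszar f2 n P Q
       \<and> (1/3) * csiszar f2 n P Q \<le> csiszar f6 n P Q"
proof -
  have nonneg: "\<And>i. i < n \<Longrightarrow> 0 \<le> P i \<and> 0 \<le> Q i"
    using assms(2,3) by (auto simp: prob_vec_def less_imp_le)
  show ?thesis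
    using csiszar_mono_cmult[OF nonneg, where a = 1 and f = f8 and b = "1/3" and g = f1]
      csiszar_mono_cmult[OF nonneg, where a = "1/3" and f = f1 and b = "1/4" and g = f3]
      csiszar_mono_cmult[OF nonneg, where a = "1/4" and f = f3 and b = "1/3" and g = f2]
      csiszar_mono_cmult[OF nonneg, where a = "1/3" and f = f2 and b = 1 and g = f6]
      f8_f1_f3_f2_f6_chain
    by simp
qed

end
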